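(* In the setting described in the context, the following hold. (1) Suppose that for a fixed $b_0\in(0,1)$ and some $b_h<b_0$ one has $|J(u)-J(u_h^{(2)})|<b_h|J(u)-J(\tilde u)|$. Then $$I_{eff}:=\frac{|\eta^{(2)}|}{|J(u)-J(\tilde u)|}\in[1-b_0,\,1+b_0].$$ If moreover this holds along a family of such configurations (indexed by $h$) with $b_h\to0$, then $I_{eff}\to1$. (2) Suppose that for a fixed $b_{0,\gamma}\in(0,1)$ and some $b_{h,\gamma}<b_{0,\gamma}$ one has $\gamma<b_{h,\gamma}|J(u)-J(\tilde u)|$. Then $$I_{eff,\gamma}:=\frac{|\eta_h^{(2)}|}{|J(u)-J(\tilde u)|}\in[1-b_{0,\gamma},\,1+b_{0,\gamma}].$$ If moreover this holds along a family of such configurations with $b_{h,\gamma}\to0$, then $I_{eff,\gamma}\to1$.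
   Context: Let $U$ and $V$ be real Banach spaces with dual $V^*$. Let $\mathcal{A}:U\to V^*$ be a (nonlinear) operator that is three times continuously Fréchet differentiable, and let $J:U\to\mathbb{R}$ be three times continuously Fréchet differentiable. Notation: $\mathcal{A}(w)(v)$ is the value of $\mathcal{A}(w)\in V^*$ at $v\in V$. For fixed $v$, $\mathcal{A}'(w)(\varphi,v)$, $\mathcal{A}''(w)(\varphi,\psi,v)$ and $\mathcal{A}'''(w)(\varphi,\psi,\chi,v)$ denote the first, second and third Fréchet derivatives of $w\mapsto\mathcal{A}(w)(v)$ at $w$ in the directions $\varphi,\psi,\chi\in U$. Analogously, $J'(w)(\varphi)$ and $J'''(w)(\varphi,\psi,\chi)$ denote derivatives of $J$. Let $u\in U$ satisfy $\mathcal{A}(u)(v)=0$ for all $v\in V$, and let $z\in V$ satisfy $\mathcal{A}'(u)(\varphi,z)=J'(u)(\varphi)$ for all $\varphi\in U$. Let $U_h^{(2)}\subset U$ and $V_h^{(2)}\subset V$ be finite-dimensional subspaces. Let $u_h^{(2)}\in U_h^{(2)}$ satisfy $\mathcal{A}(u_h^{(2)})(v)=0$ for all $v\in V_h^{(2)}$. Let $z_h^{(2)}\in V_h^{(2)}$ satisfy $\mathcal{A}'(u_h^{(2)})(\varphi,z_h^{(2)})=J'(u_h^{(2)})(\varphi)$ for all $\varphi\in U_h^{(2)}$. Let $\tilde u\in U_h^{(2)}$ and $\tilde z\in V_h^{(2)}$ be arbitrary fixed elements. Define $\rho(\tilde u)(v):=-\mathcal{A}(\tilde u)(v)$ and $\rho^*(\tilde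 u,\tilde z)(\varphi):=J'(\tilde u)(\varphi)-\mathcal{A}'(\tilde u)(\varphi,\tilde z)$. With $e:=u-\tilde u$ and $e^*:=z-\tilde z$, define $$\mathcal{R}^{(3)}:=\frac12\int_0^1\Big[J'''(\tilde u+se)(e,e,e)-\mathcal{A}'''(\tilde u+se)(e,e,e,\tilde z+se^* )-3\mathcal{A}''(\tilde u+se)(e,e,e^* )\Big]s(s-1)\,ds.$$ Let $\mathcal{R}^{(3)(2)}$ be the same expression with $e,e^*,z$ replaced by $e^{(2)}:=u_h^{(2)}-\tilde u$, $e^{(2),*}:=z_h^{(2)}-\tilde z$, $z_h^{(2)}$. Define $$\eta_h^{(2)}:=\tfrac12\rho(\tilde u)(z_h^{(2)}-\tilde z)+\tfrac12\rho^*(\tilde u,\tilde z)(u_h^{(2)}-\tilde u),\qquad \eta^{(2)}:=\eta_h^{(2)}+\rho(\tilde u)(\tilde z)+\mathcal{R}^{(3)(2)},$$ $$\gamma:=|J(u)-J(u_h^{(2)})|+|\mathcal{R}^{(3)}-\mathcal{R}^{(3)(2)}|+|\rho(\tilde u)(\tilde z)|+|\mathcal{R}^{(3)}|.$$ *)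

theory Defs
  imports "HOL-Analysis.Analysis"
begin

text \<open>The operator A : U \<rightarrow> V* and its Frechet derivatives are given as bounded linear
  maps; A1 w \<phi> v = A'(w)(\<phi>,v), A2 w \<phi> \<psi> v = A''(w)(\<phi>,\<psi>,v), etc.\<close>

definition finite_dim_subspace :: "'a::real_vector set \<Rightarrow> bool" where
  "finite_dim_subspace S \<longleftrightarrow> subspace S \<and> (\<exists>B. finite B \<and> span B = S)"

definition rho :: "('u \<Rightarrow> ('v::real_normed_vector \<Rightarrow>\<^sub>L real)) \<Rightarrow> 'u \<Rightarrow> 'v \<Rightarrow> real" where
  "rho A ut v = - blinfun_apply (A ut) v"

definition rhostar :: "('u::real_normed_vector \<Rightarrow> ('u \<Rightarrow>\<^sub>L real))
    \<Rightarrow> ('u \<Rightarrow> ('u \<Rightarrow>\<^sub>L ('v::real_normed_vector \<Rightarrow>\<^sub>L real))) \<Rightarrow> 'u \<Rightarrow> 'v \<Rightarrow> 'u \<Rightarrow> real" where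
  "rhostar J1 A1 ut zt \<phi> = blinfun_apply (J1 ut) \<phi> - blinfun_apply (blinfun_apply (A1 ut) \<phi>) zt"

definition R3 :: "('u::real_normed_vector \<Rightarrow> ('u \<Rightarrow>\<^sub>L 'u \<Rightarrow>\<^sub>L 'u \<Rightarrow>\<^sub>L real))
    \<Rightarrow> ('u \<Rightarrow> ('u \<Rightarrow>\<^sub>L 'u \<Rightarrow>\<^sub>L ('v::real_normed_vector \<Rightarrow>\<^sub>L real)))
    \<Rightarrow> ('u \<Rightarrow> ('u \<Rightarrow>\<^sub>L 'u \<Rightarrow>\<^sub>L 'u \<Rightarrow>\<^sub>L ('v \<Rightarrow>\<^sub>L real)))
    \<Rightarrow> 'u \<Rightarrow> 'v \<Rightarrow> 'u \<Rightarrow> 'v \<Rightarrow> real" where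
  "R3 J3 A2 A3 ut zt e es = 1/2 * integral {0..1} (\<lambda>s::real.
      (blinfun_apply (blinfun_apply (blinfun_apply (J3 (ut + s *\<^sub>R e)) e) e) e
       - blinfun_apply (blinfun_apply (blinfun_apply (blinfun_apply (A3 (ut + s *\<^sub>R e)) e) e) e) (zt + s *\<^sub>R es)
       - 3 * blinfun_apply (blinfun_apply (blinfun_apply (A2 (ut + s *\<^sub>R e)) e) e) es)
      * (s * (s - 1)))"

definition galerkin_config :: "('u::real_normed_vector \<Rightarrow> ('v::real_normed_vector \<Rightarrow>\<^sub>L real))
    \<Rightarrow> ('u \<Rightarrow> ('u \<Rightarrow>\<^sub>L ('v \<Rightarrow>\<^sub>L real))) \<Rightarrow> ('u \<Rightarrow> ('u \<Rightarrow>\<^sub>L real))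
    \<Rightarrow> 'u set \<Rightarrow> 'v set \<Rightarrow> 'u \<Rightarrow> 'v \<Rightarrow> 'u \<Rightarrow> 'v \<Rightarrow> bool" where
  "galerkin_config A A1 J1 Uh Vh uh zh ut zt \<longleftrightarrow>
     finite_dim_subspace Uh \<and> finite_dim_subspace Vh \<and>
     uh \<in> Uh \<and> (\<forall>v\<in>Vh. blinfun_apply (A uh) v = 0) \<and>
     zh \<in> Vh \<and> (\<forall>\<phi>\<in>Uh. blinfun_apply (blinfun_apply (A1 uh) \<phi>) zh = blinfun_apply (J1 uh) \<phi>) \<and>
     ut \<in> Uh \<and> zt \<in> Vh"

definition eta_h2 where
  "eta_h2 A A1 J1 uh zh ut zt =
     1/2 * rho A ut (zh - zt) + 1/2 * rhostar J1 A1 ut zt (uh - ut)"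

definition eta2 where
  "eta2 A A1 A2 A3 J1 J3 uh zh ut zt =
     eta_h2 A A1 J1 uh zh ut zt + rho A ut zt + R3 J3 A2 A3 ut zt (uh - ut) (zh - zt)"

definition gamma where
  "gamma J A A2 A3 J3 u z uh zh ut zt =
     \<bar>J u - J uh\<bar> + \<bar>R3 J3 A2 A3 ut zt (u - ut) (z - zt) - R3 J3 A2 A3 ut zt (uh - ut) (zh - zt)\<bar>
     + \<bar>rho A ut zt\<bar> + \<bar>R3 J3 A2 A3 ut zt (u - ut) (z - zt)\<bar>"

end

theory Submission imports Defs begin

text \<open>Along the segment \<open>x s = ut + s (uh - ut)\<close>, \<open>y s = zt + s (zh - zt)\<close> the Lagrangian
  \<open>L s = J (x s) - A (x s) (y s)\<close> obeys the trapezoidal rule with cubic remainder,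
  \<open>L 1 - L 0 = (L' 0 + L' 1) / 2 + 1/2 \<integral>\<^sub>0\<^sup>1 L'''(s) s (s - 1) ds\<close>, whose remainder is exactly
  \<open>R3 J3 A2 A3 ut zt (uh - ut) (zh - zt)\<close>. Galerkin orthogonality of \<open>uh\<close> and \<open>zh\<close> gives
  \<open>L 1 = J uh\<close> and \<open>L' 1 = 0\<close>, while \<open>L 0\<close> and \<open>L' 0\<close> are residuals at \<open>(ut, zt)\<close>; hence
  \<open>J uh - J ut = eta2\<close> exactly. So \<open>J u - J ut - eta2 = J u - J uh\<close> and
  \<open>\<bar>J u - J ut - eta_h2\<bar> \<le> gamma\<close>, and a defect below \<open>b \<bar>J u - J ut\<bar>\<close> puts the effectivity
  index within \<open>b\<close> of 1.\<close>

lemma has_vector_derivative_along_line: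
  assumes "\<And>w. (F has_derivative blinfun_apply (F' w)) (at w)"
  shows "((\<lambda>s. F (a + s *\<^sub>R e)) has_vector_derivative F' (a + s *\<^sub>R e) e) (at s)"
proof -
  have "((\<lambda>s. a + s *\<^sub>R e) has_derivative (\<lambda>h. h *\<^sub>R e)) (at s)"
    by (auto intro!: derivative_eq_intros)
  from has_derivative_compose[OF this assms] show ?thesis
    by (simp add: has_vector_derivative_def blinfun.scaleR_right)
qed

lemma has_vector_derivative_blinfun_apply:
  fixes P :: "real \<Rightarrow> 'a::real_normed_vector \<Rightarrow>\<^sub>L 'b::real_normed_vector"
  assumes "(P has_vector_derivative P') (at s)" "(q has_vector_derivative q') (at s)"
  shows "((\<lambda>s. P s (q s)) has_vector_derivative P s q' + P' (q s)) (at s)"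
  using bounded_bilinear.has_vector_derivative[OF bounded_bilinear_blinfun_apply assms] by simp

lemma trapezoid_rule_remainder:
  fixes g g' g'' g''' :: "real \<Rightarrow> real"
  assumes "\<And>s. (g has_real_derivative g' s) (at s)"
    and "\<And>s. (g' has_real_derivative g'' s) (at s)"
    and "\<And>s. (g'' has_real_derivative g''' s) (at s)"
  shows "g 1 - g 0 = (g' 0 + g' 1) / 2 + 1/2 * integral {0..1} (\<lambda>s. g''' s * (s * (s - 1)))"
proof -
  \<comment> \<open>the antiderivative of \<open>g'''(s) s (s - 1) / 2\<close>, found by integrating by parts twice\<close>
  define F where "F s = g'' s * (s * (s - 1) / 2) - g' s * (s - 1/2) + g s" for s
  have "(F has_real_derivative g''' s * (s * (s - 1)) / 2) (at s)" for s
    unfolding F_def by (auto intro!: derivative_eq_intros assms simp: field_simps)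
  then have "((\<lambda>s. g''' s * (s * (s - 1)) / 2) has_integral F 1 - F 0) {0..1}"
    by (intro fundamental_theorem_of_calculus)
       (auto simp: has_real_derivative_iff_has_vector_derivative intro: has_vector_derivative_at_within)
  then have "integral {0..1} (\<lambda>s. g''' s * (s * (s - 1)) / 2) = F 1 - F 0"
    by (rule integral_unique)
  then show ?thesis
    unfolding F_def by (simp add: field_simps)
qed

context
  fixes A :: "'u::real_normed_vector \<Rightarrow> ('v::real_normed_vector \<Rightarrow>\<^sub>L real)"
    and A1 :: "'u \<Rightarrow> ('u \<Rightarrow>\<^sub>L ('v \<Rightarrow>\<^sub>L real))"
    and A2 :: "'u \<Rightarrow> ('u \<Rightarrow>\<^sub>L 'u \<Rightarrow>\<^sub>L ('v \<Rightarrow>\<^sub>L real))"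
    and A3 :: "'u \<Rightarrow> ('u \<Rightarrow>\<^sub>L 'u \<Rightarrow>\<^sub>L 'u \<Rightarrow>\<^sub>L ('v \<Rightarrow>\<^sub>L real))"
    and J :: "'u \<Rightarrow> real"
    and J1 :: "'u \<Rightarrow> ('u \<Rightarrow>\<^sub>L real)"
    and J2 :: "'u \<Rightarrow> ('u \<Rightarrow>\<^sub>L 'u \<Rightarrow>\<^sub>L real)"
    and J3 :: "'u \<Rightarrow> ('u \<Rightarrow>\<^sub>L 'u \<Rightarrow>\<^sub>L 'u \<Rightarrow>\<^sub>L real)"
  assumes dA: "\<And>w. (A has_derivative blinfun_apply (A1 w)) (at w)"
    and dA1: "\<And>w. (A1 has_derivative blinfun_apply (A2 w)) (at w)"
    and dA2: "\<And>w. (A2 has_derivative blinfun_apply (A3 w)) (at w)"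
    and dJ: "\<And>w. (J has_derivative blinfun_apply (J1 w)) (at w)"
    and dJ1: "\<And>w. (J1 has_derivative blinfun_apply (J2 w)) (at w)"
    and dJ2: "\<And>w. (J2 has_derivative blinfun_apply (J3 w)) (at w)"
begin

lemma lagrangian_trapezoid:
  "(J (ut + e) - A (ut + e) (zt + es)) - (J ut - A ut zt) =
    (J1 ut e - A1 ut e zt - A ut es + J1 (ut + e) e - A1 (ut + e) e (zt + es) - A (ut + e) es) / 2
    + R3 J3 A2 A3 ut zt e es"
proof -
  define x where "x s = ut + s *\<^sub>R e" for s :: real
  define y where "y s = zt + s *\<^sub>R es" for s :: real
  define L where "L s = J (x s) - A (x s) (y s)" for s
  define L' where "L' s = J1 (x s) e - A1 (x s) e (y s) - A (x s) es" for s
  define L'' where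
    "L'' s = J2 (x s) e e - A2 (x s) e e (y s) - 2 * A1 (x s) e es" for s
  define L''' where
    "L''' s = J3 (x s) e e e - A3 (x s) e e e (y s) - 3 * A2 (x s) e e es" for s
  have y: "(y has_vector_derivative es) (at s)" for s
    unfolding y_def by (auto intro!: derivative_eq_intros)
  note along_x = has_vector_derivative_along_line[where a = ut and e = e, folded x_def]
  note rules = derivative_intros has_vector_derivative_mult has_vector_derivative_blinfun_apply
    y along_x[OF dA] along_x[OF dA1] along_x[OF dA2]
    along_x[OF dJ] along_x[OF dJ1] along_x[OF dJ2]
  have "(L has_vector_derivative L' s) (at s)" for s
    unfolding L_def L'_def
    by (rule has_vector_derivative_eq_rhs, (rule rules)+) (simp add: algebra_simps)
  moreover have "(L' has_vector_derivative L'' s) (at s)" for s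
    unfolding L'_def L''_def
    by (rule has_vector_derivative_eq_rhs, (rule rules)+) (simp add: algebra_simps)
  moreover have "(L'' has_vector_derivative L''' s) (at s)" for s
    unfolding L''_def L'''_def
    by (rule has_vector_derivative_eq_rhs, (rule rules)+) (simp add: algebra_simps)
  ultimately have "L 1 - L 0 = (L' 0 + L' 1) / 2 + 1/2 * integral {0..1} (\<lambda>s. L''' s * (s * (s - 1)))"
    by (intro trapezoid_rule_remainder) (simp_all add: has_real_derivative_iff_has_vector_derivative)
  then show ?thesis
    unfolding L_def L'_def L'''_def x_def y_def R3_def by simp
qed

lemma galerkin_error_representation:
  assumes gc: "galerkin_config A A1 J1 Uh Vh uh zh ut zt"
  shows "J uh - J ut = eta2 A A1 A2 A3 J1 J3 uh zh ut zt"
proof -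
  have "subspace Uh" "subspace Vh"
    using gc by (auto simp: galerkin_config_def finite_dim_subspace_def)
  then have "uh - ut \<in> Uh" "zh - zt \<in> Vh"
    using gc by (auto simp: galerkin_config_def intro: subspace_diff)
  then have "A uh zh = 0" "A uh (zh - zt) = 0" "J1 uh (uh - ut) - A1 uh (uh - ut) zh = 0"
    using gc by (auto simp: galerkin_config_def)
  moreover have "(J uh - A uh zh) - (J ut - A ut zt) =
      (J1 ut (uh - ut) - A1 ut (uh - ut) zt - A ut (zh - zt)
       + J1 uh (uh - ut) - A1 uh (uh - ut) zh - A uh (zh - zt)) / 2
      + R3 J3 A2 A3 ut zt (uh - ut) (zh - zt)"
    using lagrangian_trapezoid[of ut "uh - ut" zt "zh - zt"] by simp
  ultimately show ?thesis
    by (simp add: eta2_def eta_h2_def rho_def rhostar_def field_simps)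
qed

lemma galerkin_eta2_defect:
  assumes "galerkin_config A A1 J1 Uh Vh uh zh ut zt"
  shows "\<bar>(J u - J ut) - eta2 A A1 A2 A3 J1 J3 uh zh ut zt\<bar> \<le> \<bar>J u - J uh\<bar>"
  using galerkin_error_representation[OF assms] by simp

lemma galerkin_eta_h2_defect_le_gamma:
  assumes "galerkin_config A A1 J1 Uh Vh uh zh ut zt"
  shows "\<bar>(J u - J ut) - eta_h2 A A1 J1 uh zh ut zt\<bar> \<le> gamma J A A2 A3 J3 u z uh zh ut zt"
  \<comment> \<open>the last two summands of \<open>gamma\<close> bound \<open>R3\<close> at the discrete errors\<close>
  using galerkin_error_representation[OF assms] unfolding eta2_def gamma_def by linarith

end

lemma effectivity_index_deviation:
  fixes E \<eta> c b :: real
  assumes "\<bar>E - \<eta>\<bar> \<le> c" and "c < b * \<bar>E\<bar>"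
  shows "\<bar>\<bar>\<eta>\<bar> / \<bar>E\<bar> - 1\<bar> \<le> b"
proof -
  have "0 < b * \<bar>E\<bar>"
    using assms abs_ge_zero[of "E - \<eta>"] by linarith
  then have E: "\<bar>E\<bar> > 0"
    by (cases "E = 0") auto
  have "\<bar>\<eta>\<bar> / \<bar>E\<bar> - 1 = (\<bar>\<eta>\<bar> - \<bar>E\<bar>) / \<bar>E\<bar>"
    using E by (simp add: field_simps)
  then have "\<bar>\<bar>\<eta>\<bar> / \<bar>E\<bar> - 1\<bar> = \<bar>\<bar>\<eta>\<bar> - \<bar>E\<bar>\<bar> / \<bar>E\<bar>"
    by (simp add: abs_divide)
  also have "\<dots> \<le> b"
    using abs_triangle_ineq3[of \<eta> E] abs_minus_commute[of \<eta> E] assms E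
    by (simp add: pos_divide_le_eq)
  finally show ?thesis .
qed

lemma effectivity_index_in_interval:
  fixes E \<eta> c b b0 :: real
  assumes "\<bar>E - \<eta>\<bar> \<le> c" and "c < b * \<bar>E\<bar>" and "b < b0"
  shows "\<bar>\<eta>\<bar> / \<bar>E\<bar> \<in> {1 - b0 .. 1 + b0}"
  using effectivity_index_deviation[OF assms(1,2)] assms(3) by (simp add: abs_le_iff)

lemma effectivity_index_tendsto_1:
  fixes E \<eta> c b :: "nat \<Rightarrow> real"
  assumes "\<And>n. \<bar>E n - \<eta> n\<bar> \<le> c n" and "\<And>n. c n < b n * \<bar>E n\<bar>" and "b \<longlonglongrightarrow> 0"
  shows "(\<lambda>n. \<bar>\<eta> n\<bar> / \<bar>E n\<bar>) \<longlonglongrightarrow> 1"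
proof -
  have "(\<lambda>n. \<bar>\<eta> n\<bar> / \<bar>E n\<bar> - 1) \<longlonglongrightarrow> 0"
    using effectivity_index_deviation[OF assms(1,2)]
    by (intro Lim_null_comparison[OF always_eventually assms(3)]) simp
  then show ?thesis
    by (simp add: LIM_zero_iff)
qed

theorem mainTheorem3:
  fixes A :: "'u::banach \<Rightarrow> ('v::banach \<Rightarrow>\<^sub>L real)"
    and A1 :: "'u \<Rightarrow> ('u \<Rightarrow>\<^sub>L ('v \<Rightarrow>\<^sub>L real))"
    and A2 :: "'u \<Rightarrow> ('u \<Rightarrow>\<^sub>L 'u \<Rightarrow>\<^sub>L ('v \<Rightarrow>\<^sub>L real))"
    and A3 :: "'u \<Rightarrow> ('u \<Rightarrow>\<^sub>L 'u \<Rightarrow>\<^sub>L 'u \<Rightarrow>\<^sub>L ('v \<Rightarrow>\<^sub>L real))"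
    and J :: "'u \<Rightarrow> real"
    and J1 :: "'u \<Rightarrow> ('u \<Rightarrow>\<^sub>L real)"
    and J2 :: "'u \<Rightarrow> ('u \<Rightarrow>\<^sub>L 'u \<Rightarrow>\<^sub>L real)"
    and J3 :: "'u \<Rightarrow> ('u \<Rightarrow>\<^sub>L 'u \<Rightarrow>\<^sub>L 'u \<Rightarrow>\<^sub>L real)"
    and u :: 'u and z :: 'v
  assumes dA: "\<And>w. (A has_derivative blinfun_apply (A1 w)) (at w)"
    and dA1: "\<And>w. (A1 has_derivative blinfun_apply (A2 w)) (at w)"
    and dA2: "\<And>w. (A2 has_derivative blinfun_apply (A3 w)) (at w)"
    and cA3: "continuous_on UNIV A3"
    and dJ: "\<And>w. (J has_derivative blinfun_apply (J1 w)) (at w)"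
    and dJ1: "\<And>w. (J1 has_derivative blinfun_apply (J2 w)) (at w)"
    and dJ2: "\<And>w. (J2 has_derivative blinfun_apply (J3 w)) (at w)"
    and cJ3: "continuous_on UNIV J3"
    and primal: "\<And>v. blinfun_apply (A u) v = 0"
    and adjoint: "\<And>\<phi>. blinfun_apply (blinfun_apply (A1 u) \<phi>) z = blinfun_apply (J1 u) \<phi>"
  shows
   "(\<forall>(Uh::'u set) (Vh::'v set) uh zh ut zt (b0::real) bh.
       galerkin_config A A1 J1 Uh Vh uh zh ut zt \<and> 0 < b0 \<and> b0 < 1 \<and> bh < b0 \<and>
       \<bar>J u - J uh\<bar> < bh * \<bar>J u - J ut\<bar> \<longrightarrow>
       \<bar>eta2 A A1 A2 A3 J1 J3 uh zh ut zt\<bar> / \<bar>J u - J ut\<bar> \<in> {1 - b0 .. 1 + b0})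
  \<and> (\<forall>(Uh::nat \<Rightarrow> 'u set) (Vh::nat \<Rightarrow> 'v set) uh zh ut zt (b::nat \<Rightarrow> real).
       (\<forall>n. galerkin_config A A1 J1 (Uh n) (Vh n) (uh n) (zh n) (ut n) (zt n) \<and>
            \<bar>J u - J (uh n)\<bar> < b n * \<bar>J u - J (ut n)\<bar>) \<and> b \<longlonglongrightarrow> 0 \<longrightarrow>
       (\<lambda>n. \<bar>eta2 A A1 A2 A3 J1 J3 (uh n) (zh n) (ut n) (zt n)\<bar> / \<bar>J u - J (ut n)\<bar>) \<longlonglongrightarrow> 1)
  \<and> (\<forall>(Uh::'u set) (Vh::'v set) uh zh ut zt (b0::real) bh.
       galerkin_config A A1 J1 Uh Vh uh zh ut zt \<and> 0 < b0 \<and> b0 < 1 \<and> bh < b0 \<and>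
       gamma J A A2 A3 J3 u z uh zh ut zt < bh * \<bar>J u - J ut\<bar> \<longrightarrow>
       \<bar>eta_h2 A A1 J1 uh zh ut zt\<bar> / \<bar>J u - J ut\<bar> \<in> {1 - b0 .. 1 + b0})
  \<and> (\<forall>(Uh::nat \<Rightarrow> 'u set) (Vh::nat \<Rightarrow> 'v set) uh zh ut zt (b::nat \<Rightarrow> real).
       (\<forall>n. galerkin_config A A1 J1 (Uh n) (Vh n) (uh n) (zh n) (ut n) (zt n) \<and>
            gamma J A A2 A3 J3 u z (uh n) (zh n) (ut n) (zt n) < b n * \<bar>J u - J (ut n)\<bar>) \<and> b \<longlonglongrightarrow> 0 \<longrightarrow>
       (\<lambda>n. \<bar>eta_h2 A A1 J1 (uh n) (zh n) (ut n) (zt n)\<bar> / \<bar>J u - J (ut n)\<bar>) \<longlonglongrightarrow> 1)"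
proof -
  note defect_bounds = galerkin_eta2_defect[OF dA dA1 dA2 dJ dJ1 dJ2]
    galerkin_eta_h2_defect_le_gamma[OF dA dA1 dA2 dJ dJ1 dJ2]
  show ?thesis
    by (intro conjI allI impI; elim conjE;
        (blast intro: effectivity_index_in_interval[OF defect_bounds(1)]
           effectivity_index_in_interval[OF defect_bounds(2)])?;
        intro effectivity_index_tendsto_1[OF defect_bounds(1)]
          effectivity_index_tendsto_1[OF defect_bounds(2)]; auto)
qed

end
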